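(* Consider a finite game: players $I=\{1,\ldots,n\}$, finite nonempty pure strategy sets $S_i$, $S=\prod_i S_i$, payoffs $g_i\colon S\to\mathbb{R}$, mixed strategy sets $\Sigma_i$ (probability distributions on $S_i$), $\Sigma=\prod_i\Sigma_i\subseteq\mathbb{R}^k$ with the Euclidean distance, and $f_i\colon\Sigma\to\mathbb{R}$ the multilinear extension of $g_i$. Let $r\colon\Sigma\to S$ be a root function. Then for all $\sigma\in\Sigma$ and $i\in I$: (i) $\alpha_{r_i(\sigma)}(\sigma_i)>0$ and $A_i^{r_i(\sigma)}(\sigma)=0$; (ii) for every $s\in S_i$, if $s\notin\operatorname{supp}(\sigma_i)$ then $s\notin\operatorname{supp}(r_i(\sigma))$; (iii) if $(\sigma^k)_{k\in\mathbb{N}}$ is a sequence in $\Sigma$ with $\sigma^k\to\sigma$, $i\Uparrow\sigma^k$ for all $k$, and $A_i(\sigma)=0$, then $T(\sigma)=0$.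
   Context: Pure strategies $s\in S_i$ are identified with degenerate distributions in $\Sigma_i$. For $\sigma_i\in\Sigma_i$ and $s\in S_i$, $\alpha_s(\sigma_i)$ is the probability $\sigma_i$ assigns to $s$, and $\operatorname{supp}(\sigma_i)=\{s:\alpha_s(\sigma_i)>0\}$. For $\sigma\in\Sigma$, $\sigma(i,s)$ is the profile obtained by replacing $\sigma_i$ by $s$. Define $A_i^s(\sigma)=\max\{f_i(\sigma(i,s))-f_i(\sigma),0\}$, $A_i(\sigma)=\max_{s\in S_i}A_i^s(\sigma)$, $T(\sigma)=\sum_{i\in I}A_i(\sigma)$, and write $i\Uparrow\sigma$ if $A_i(\sigma)>\frac{T(\sigma)}{n+1}$. A root function is a map $r\colon\Sigma\to S$ such that for all $\sigma\in\Sigma$ and $i\in I$, $r_i(\sigma)\in\operatorname{supp}(\sigma_i)$ and $A_i^{r_i(\sigma)}(\sigma)=0$. *)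

theory Defs
  imports "HOL-Analysis.Analysis"
begin

text \<open>Finite game: players {1..n}, pure strategy sets S i (of a common ambient type 'b),
  payoffs g i defined on pure profiles (elements of PiE {1..n} S).\<close>

definition mixed_strats :: "'b set \<Rightarrow> ('b \<Rightarrow> real) set" where
  "mixed_strats A = {x. (\<forall>t. 0 \<le> x t) \<and> (\<forall>t. t \<notin> A \<longrightarrow> x t = 0) \<and> sum x A = 1}"

definition mixed_profiles :: "nat \<Rightarrow> (nat \<Rightarrow> 'b set) \<Rightarrow> (nat \<Rightarrow> 'b \<Rightarrow> real) set" where
  "mixed_profiles n S = {\<sigma>. (\<forall>i\<in>{1..n}. \<sigma> i \<in> mixed_strats (S i)) \<and> (\<forall>i. i \<notin> {1..n} \<longrightarrow> \<sigma> i = (\<lambda>_. 0))}"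

text \<open>Degenerate distribution identified with the pure strategy s.\<close>
definition degen :: "'b \<Rightarrow> 'b \<Rightarrow> real" where
  "degen s = (\<lambda>t. if t = s then 1 else 0)"

definition alpha :: "'b \<Rightarrow> ('b \<Rightarrow> real) \<Rightarrow> real" where
  "alpha s x = x s"

definition supp_dist :: "('b \<Rightarrow> real) \<Rightarrow> 'b set" where
  "supp_dist x = {s. alpha s x > 0}"

definition mlext :: "nat \<Rightarrow> (nat \<Rightarrow> 'b set) \<Rightarrow> (nat \<Rightarrow> (nat \<Rightarrow> 'b) \<Rightarrow> real)
    \<Rightarrow> nat \<Rightarrow> (nat \<Rightarrow> 'b \<Rightarrow> real) \<Rightarrow> real" where
  "mlext n S g i \<sigma> = (\<Sum>p\<in>PiE {1..n} S. (\<Prod>j\<in>{1..n}. \<sigma> j (p j)) * g i p)"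

definition deviate :: "(nat \<Rightarrow> 'b \<Rightarrow> real) \<Rightarrow> nat \<Rightarrow> 'b \<Rightarrow> (nat \<Rightarrow> 'b \<Rightarrow> real)" where
  "deviate \<sigma> i s = \<sigma>(i := degen s)"

definition A_dev :: "nat \<Rightarrow> (nat \<Rightarrow> 'b set) \<Rightarrow> (nat \<Rightarrow> (nat \<Rightarrow> 'b) \<Rightarrow> real)
    \<Rightarrow> nat \<Rightarrow> 'b \<Rightarrow> (nat \<Rightarrow> 'b \<Rightarrow> real) \<Rightarrow> real" where
  "A_dev n S g i s \<sigma> = max (mlext n S g i (deviate \<sigma> i s) - mlext n S g i \<sigma>) 0"

definition A_max :: "nat \<Rightarrow> (nat \<Rightarrow> 'b set) \<Rightarrow> (nat \<Rightarrow> (nat \<Rightarrow> 'b) \<Rightarrow> real)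
    \<Rightarrow> nat \<Rightarrow> (nat \<Rightarrow> 'b \<Rightarrow> real) \<Rightarrow> real" where
  "A_max n S g i \<sigma> = Max ((\<lambda>s. A_dev n S g i s \<sigma>) ` S i)"

definition T_sum :: "nat \<Rightarrow> (nat \<Rightarrow> 'b set) \<Rightarrow> (nat \<Rightarrow> (nat \<Rightarrow> 'b) \<Rightarrow> real)
    \<Rightarrow> (nat \<Rightarrow> 'b \<Rightarrow> real) \<Rightarrow> real" where
  "T_sum n S g \<sigma> = (\<Sum>i\<in>{1..n}. A_max n S g i \<sigma>)"

definition up :: "nat \<Rightarrow> (nat \<Rightarrow> 'b set) \<Rightarrow> (nat \<Rightarrow> (nat \<Rightarrow> 'b) \<Rightarrow> real)
    \<Rightarrow> nat \<Rightarrow> (nat \<Rightarrow> 'b \<Rightarrow> real) \<Rightarrow> bool" where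
  "up n S g i \<sigma> \<longleftrightarrow> A_max n S g i \<sigma> > T_sum n S g \<sigma> / (real n + 1)"

definition root_function :: "nat \<Rightarrow> (nat \<Rightarrow> 'b set) \<Rightarrow> (nat \<Rightarrow> (nat \<Rightarrow> 'b) \<Rightarrow> real)
    \<Rightarrow> ((nat \<Rightarrow> 'b \<Rightarrow> real) \<Rightarrow> (nat \<Rightarrow> 'b)) \<Rightarrow> bool" where
  "root_function n S g r \<longleftrightarrow>
     (\<forall>\<sigma>\<in>mixed_profiles n S. \<forall>i\<in>{1..n}.
        r \<sigma> i \<in> supp_dist (\<sigma> i) \<and> A_dev n S g i (r \<sigma> i) \<sigma> = 0)"

text \<open>Convergence in the Euclidean topology of the coordinates (i,s), s in S i.\<close>
definition mixed_converges :: "nat \<Rightarrow> (nat \<Rightarrow> 'b set) \<Rightarrow> (nat \<Rightarrow> nat \<Rightarrow> 'b \<Rightarrow> real)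
    \<Rightarrow> (nat \<Rightarrow> 'b \<Rightarrow> real) \<Rightarrow> bool" where
  "mixed_converges n S \<sigma>s \<sigma> \<longleftrightarrow>
     (\<forall>i\<in>{1..n}. \<forall>s\<in>S i. (\<lambda>k. \<sigma>s k i s) \<longlonglongrightarrow> \<sigma> i s)"

end

theory Submission
  imports Defs
begin

text \<open>Parts (i) and (ii) are immediate from the definition of a root function, since the
  degenerate distribution on \<open>r\<^sub>i(\<sigma>)\<close> has support \<open>{r\<^sub>i(\<sigma>)}\<close>. For (iii), each \<open>f\<^sub>i\<close> is a
  polynomial in the coordinates of \<open>\<sigma>\<close>, so \<open>A\<^sub>i\<close> and \<open>T\<close>, built from it by maxima and finite
  sums, are continuous. Passing to the limit in the strict inequalities
  \<open>T(\<sigma>\<^sup>k) < (n+1) A\<^sub>i(\<sigma>\<^sup>k)\<close> gives \<open>T(\<sigma>) \<le> (n+1) A\<^sub>i(\<sigma>) = 0\<close>, and \<open>T \<ge> 0\<close>.\<close>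

lemma supp_dist_degen [simp]: "supp_dist (degen s) = {s}"
  by (simp add: supp_dist_def alpha_def degen_def)

lemma root_functionD:
  assumes "root_function n S g r" "\<sigma> \<in> mixed_profiles n S" "i \<in> {1..n}"
  shows "r \<sigma> i \<in> supp_dist (\<sigma> i)" and "A_dev n S g i (r \<sigma> i) \<sigma> = 0"
  using assms unfolding root_function_def by auto

lemma A_max_nonneg:
  assumes "finite (S i)" "S i \<noteq> {}"
  shows "0 \<le> A_max n S g i \<sigma>"
proof -
  obtain s where s: "s \<in> S i" using assms(2) by blast
  have "0 \<le> A_dev n S g i s \<sigma>" by (simp add: A_dev_def)
  also have "\<dots> \<le> A_max n S g i \<sigma>"
    unfolding A_max_def using assms(1) s by (intro Max_ge) auto
  finally show ?thesis .
qed

lemma T_sum_nonneg: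
  assumes "\<And>j. j \<in> {1..n} \<Longrightarrow> finite (S j)" "\<And>j. j \<in> {1..n} \<Longrightarrow> S j \<noteq> {}"
  shows "0 \<le> T_sum n S g \<sigma>"
  unfolding T_sum_def using assms by (intro sum_nonneg A_max_nonneg)

lemma mlext_tendsto:
  assumes "\<And>j s. j \<in> {1..n} \<Longrightarrow> s \<in> S j \<Longrightarrow> ((\<lambda>x. \<tau> x j s) \<longlongrightarrow> \<sigma> j s) F"
  shows "((\<lambda>x. mlext n S g i (\<tau> x)) \<longlongrightarrow> mlext n S g i \<sigma>) F"
  unfolding mlext_def
proof (intro tendsto_sum tendsto_mult tendsto_prod tendsto_const)
  fix p j assume "p \<in> PiE {1..n} S" "j \<in> {1..n}"
  then show "((\<lambda>x. \<tau> x j (p j)) \<longlongrightarrow> \<sigma> j (p j)) F"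
    using assms by (simp add: PiE_mem)
qed

lemma A_dev_tendsto:
  assumes "\<And>j s. j \<in> {1..n} \<Longrightarrow> s \<in> S j \<Longrightarrow> ((\<lambda>x. \<tau> x j s) \<longlongrightarrow> \<sigma> j s) F"
  shows "((\<lambda>x. A_dev n S g i t (\<tau> x)) \<longlongrightarrow> A_dev n S g i t \<sigma>) F"
proof -
  have "((\<lambda>x. mlext n S g i (deviate (\<tau> x) i t)) \<longlongrightarrow> mlext n S g i (deviate \<sigma> i t)) F"
    by (rule mlext_tendsto) (simp add: deviate_def assms)
  moreover have "((\<lambda>x. mlext n S g i (\<tau> x)) \<longlongrightarrow> mlext n S g i \<sigma>) F"
    using assms by (rule mlext_tendsto)
  ultimately show ?thesis
    unfolding A_dev_def by (intro tendsto_max tendsto_diff tendsto_const)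
qed

lemma A_max_tendsto:
  assumes "finite (S i)" "S i \<noteq> {}"
    and "\<And>j s. j \<in> {1..n} \<Longrightarrow> s \<in> S j \<Longrightarrow> ((\<lambda>x. \<tau> x j s) \<longlongrightarrow> \<sigma> j s) F"
  shows "((\<lambda>x. A_max n S g i (\<tau> x)) \<longlongrightarrow> A_max n S g i \<sigma>) F"
proof -
  have "A_max n S g i \<rho> = (SUP s\<in>S i. A_dev n S g i s \<rho>)" for \<rho>
    using assms(1,2) by (simp add: A_max_def cSup_eq_Max)
  then show ?thesis
    using assms(1,3) by (simp only:) (intro tendsto_Sup A_dev_tendsto)
qed

lemma T_sum_tendsto:
  assumes "\<And>j. j \<in> {1..n} \<Longrightarrow> finite (S j)" "\<And>j. j \<in> {1..n} \<Longrightarrow> S j \<noteq> {}"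
    and "\<And>j s. j \<in> {1..n} \<Longrightarrow> s \<in> S j \<Longrightarrow> ((\<lambda>x. \<tau> x j s) \<longlongrightarrow> \<sigma> j s) F"
  shows "((\<lambda>x. T_sum n S g (\<tau> x)) \<longlongrightarrow> T_sum n S g \<sigma>) F"
  unfolding T_sum_def using assms by (intro tendsto_sum A_max_tendsto)

lemma T_sum_le_A_max_if_eventually_up:
  assumes "\<And>j. j \<in> {1..n} \<Longrightarrow> finite (S j)" "\<And>j. j \<in> {1..n} \<Longrightarrow> S j \<noteq> {}"
    and "i \<in> {1..n}" "F \<noteq> bot"
    and "\<And>j s. j \<in> {1..n} \<Longrightarrow> s \<in> S j \<Longrightarrow> ((\<lambda>x. \<tau> x j s) \<longlongrightarrow> \<sigma> j s) F"
    and "eventually (\<lambda>x. up n S g i (\<tau> x)) F"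
  shows "T_sum n S g \<sigma> / (real n + 1) \<le> A_max n S g i \<sigma>"
proof -
  have "((\<lambda>x. A_max n S g i (\<tau> x) - T_sum n S g (\<tau> x) / (real n + 1))
      \<longlongrightarrow> A_max n S g i \<sigma> - T_sum n S g \<sigma> / (real n + 1)) F"
    using assms by (intro tendsto_diff tendsto_divide tendsto_const A_max_tendsto T_sum_tendsto) auto
  moreover have "eventually (\<lambda>x. 0 \<le> A_max n S g i (\<tau> x) - T_sum n S g (\<tau> x) / (real n + 1)) F"
    using assms(6) by eventually_elim (simp add: up_def)
  ultimately have "0 \<le> A_max n S g i \<sigma> - T_sum n S g \<sigma> / (real n + 1)"
    using \<open>F \<noteq> bot\<close> by (intro tendsto_lowerbound) auto
  then show ?thesis by simp
qed

theorem mainTheorem3: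
  fixes n :: nat and S :: "nat \<Rightarrow> 'b set" and g :: "nat \<Rightarrow> (nat \<Rightarrow> 'b) \<Rightarrow> real"
    and r :: "(nat \<Rightarrow> 'b \<Rightarrow> real) \<Rightarrow> (nat \<Rightarrow> 'b)"
    and \<sigma> :: "nat \<Rightarrow> 'b \<Rightarrow> real" and i :: nat
  assumes fin: "\<And>j. j \<in> {1..n} \<Longrightarrow> finite (S j)"
    and ne: "\<And>j. j \<in> {1..n} \<Longrightarrow> S j \<noteq> {}"
    and root: "root_function n S g r"
    and sig: "\<sigma> \<in> mixed_profiles n S"
    and i: "i \<in> {1..n}"
  shows "(alpha (r \<sigma> i) (\<sigma> i) > 0 \<and> A_dev n S g i (r \<sigma> i) \<sigma> = 0)
       \<and> (\<forall>s\<in>S i. s \<notin> supp_dist (\<sigma> i) \<longrightarrow> s \<notin> supp_dist (degen (r \<sigma> i)))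
       \<and> (\<forall>\<sigma>s :: nat \<Rightarrow> nat \<Rightarrow> 'b \<Rightarrow> real.
            (\<forall>k. \<sigma>s k \<in> mixed_profiles n S) \<and> mixed_converges n S \<sigma>s \<sigma>
            \<and> (\<forall>k. up n S g i (\<sigma>s k)) \<and> A_max n S g i \<sigma> = 0
            \<longrightarrow> T_sum n S g \<sigma> = 0)"
proof (intro conjI ballI allI impI)
  show "alpha (r \<sigma> i) (\<sigma> i) > 0" and "A_dev n S g i (r \<sigma> i) \<sigma> = 0"
    using root_functionD [OF root sig i] by (simp_all add: supp_dist_def)
  show "s \<notin> supp_dist (degen (r \<sigma> i))" if "s \<notin> supp_dist (\<sigma> i)" for s
    using that root_functionD(1) [OF root sig i] by auto
next
  fix \<sigma>s :: "nat \<Rightarrow> nat \<Rightarrow> 'b \<Rightarrow> real"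
  assume "(\<forall>k. \<sigma>s k \<in> mixed_profiles n S) \<and> mixed_converges n S \<sigma>s \<sigma>
    \<and> (\<forall>k. up n S g i (\<sigma>s k)) \<and> A_max n S g i \<sigma> = 0"
  then have conv: "\<And>j s. j \<in> {1..n} \<Longrightarrow> s \<in> S j \<Longrightarrow> (\<lambda>k. \<sigma>s k j s) \<longlonglongrightarrow> \<sigma> j s"
    and up: "\<forall>\<^sub>F k in sequentially. up n S g i (\<sigma>s k)"
    and A_zero: "A_max n S g i \<sigma> = 0"
    by (auto simp: mixed_converges_def)
  have "T_sum n S g \<sigma> / (real n + 1) \<le> 0"
    using T_sum_le_A_max_if_eventually_up [OF fin ne i trivial_limit_sequentially conv up] A_zero
    by simp
  moreover have "0 \<le> T_sum n S g \<sigma>"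
    using fin ne by (rule T_sum_nonneg)
  ultimately show "T_sum n S g \<sigma> = 0"
    by (simp add: divide_le_0_iff)
qed

end
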